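(* Let $n\ge 3$ and let $\mathfrak{f}_n$ be the $n$-dimensional complex (model) filiform Lie algebra with basis $\{e_i\}_{i=1}^n$ whose only nonzero brackets are $[e_1,e_h]=e_{h-1}$ for $3\le h\le n$. Then $\overline{\mu}(\mathfrak{f}_n)=n$. Moreover, the linear map sending $e_1\mapsto \sum_{i=1}^{n-2}X_{i,i+1}$ and $e_j\mapsto X_{j-1,n}$ for $2\le j\le n$ is an injective Lie algebra homomorphism $\mathfrak{f}_n\to\mathfrak{h}_n$ (a natural representative of a minimal faithful representation).
   Context: All Lie algebras are finite-dimensional over $\mathbb{C}$. For $m\in\mathbb N$, $\mathfrak{h}_m$ denotes the Lie algebra (with commutator bracket) of complex $m\times m$ upper-triangular matrices, and $X_{i,j}$ ($1\le i\le j\le m$) denotes the matrix unit with entry $1$ in position $(i,j)$ and $0$ elsewhere. For a solvable Lie algebra $\mathfrak g$, $\overline{\mu}(\mathfrak g)=\min\{m\in\mathbb N : \mathfrak{h}_m \text{ contains a Lie subalgebra isomorphic to } \mathfrak g\}$. *)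

theory Defs
  imports Complex_Main "Jordan_Normal_Form.Matrix"
begin

(* Conventions: indices in the paper are 1-based, JNF indices are 0-based.
   The paper's basis vector e_i of f_n is  unit_vec n (i-1);
   the paper's matrix unit X_{i,j} in h_m is  Xmat m i j  (entry (i-1,j-1) = 1). *)

definition Xmat :: "nat \<Rightarrow> nat \<Rightarrow> nat \<Rightarrow> complex mat" where
  "Xmat m i j = mat m m (\<lambda>(a,b). if a = i - 1 \<and> b = j - 1 then 1 else 0)"

definition upper_tri :: "nat \<Rightarrow> complex mat set" where
  "upper_tri m = {A \<in> carrier_mat m m. \<forall>i<m. \<forall>j<i. A $$ (i,j) = 0}"

definition commutator :: "complex mat \<Rightarrow> complex mat \<Rightarrow> complex mat" where
  "commutator A B = A * B - B * A"

definition lie_subalgebra_h :: "nat \<Rightarrow> complex mat set \<Rightarrow> bool" where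
  "lie_subalgebra_h m L \<longleftrightarrow> L \<subseteq> upper_tri m \<and> 0\<^sub>m m m \<in> L \<and>
     (\<forall>A\<in>L. \<forall>B\<in>L. A + B \<in> L) \<and> (\<forall>c. \<forall>A\<in>L. c \<cdot>\<^sub>m A \<in> L) \<and>
     (\<forall>A\<in>L. \<forall>B\<in>L. commutator A B \<in> L)"

text \<open>A Lie algebra is given by its underlying space C^d (carrier_vec d) and a bracket.
  phi is a Lie algebra isomorphism from (C^d, br) onto L.\<close>
definition lie_iso :: "nat \<Rightarrow> (complex vec \<Rightarrow> complex vec \<Rightarrow> complex vec) \<Rightarrow> complex mat set
    \<Rightarrow> (complex vec \<Rightarrow> complex mat) \<Rightarrow> bool" where
  "lie_iso d br L \<phi> \<longleftrightarrow> bij_betw \<phi> (carrier_vec d) L \<and>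
     (\<forall>x\<in>carrier_vec d. \<forall>y\<in>carrier_vec d. \<phi> (x + y) = \<phi> x + \<phi> y) \<and>
     (\<forall>c. \<forall>x\<in>carrier_vec d. \<phi> (c \<cdot>\<^sub>v x) = c \<cdot>\<^sub>m \<phi> x) \<and>
     (\<forall>x\<in>carrier_vec d. \<forall>y\<in>carrier_vec d. \<phi> (br x y) = commutator (\<phi> x) (\<phi> y))"

definition mu_bar :: "nat \<Rightarrow> (complex vec \<Rightarrow> complex vec \<Rightarrow> complex vec) \<Rightarrow> nat" where
  "mu_bar d br = (LEAST m. \<exists>L \<phi>. lie_subalgebra_h m L \<and> lie_iso d br L \<phi>)"

text \<open>Structure constants of the model filiform algebra f_n (0-based indices):
  [e_1, e_h] = e_{h-1} for 3 <= h <= n, i.e. [unit 0, unit j] = unit (j-1) for j >= 2,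
  together with antisymmetry; all other basis brackets are zero.\<close>
definition fil_basis_br :: "nat \<Rightarrow> nat \<Rightarrow> nat \<Rightarrow> complex vec" where
  "fil_basis_br n i j =
     (if i = 0 \<and> 2 \<le> j \<and> j < n then unit_vec n (j - 1)
      else if j = 0 \<and> 2 \<le> i \<and> i < n then - unit_vec n (i - 1)
      else 0\<^sub>v n)"

definition fil_br :: "nat \<Rightarrow> complex vec \<Rightarrow> complex vec \<Rightarrow> complex vec" where
  "fil_br n x y = vec n (\<lambda>k. \<Sum>i<n. \<Sum>j<n. x $ i * y $ j * (fil_basis_br n i j) $ k)"

definition fil_rep :: "nat \<Rightarrow> complex vec \<Rightarrow> complex mat" where
  "fil_rep n x = mat n n (\<lambda>ab.
      x $ 0 * (\<Sum>i=1..n-2. Xmat n i (i+1) $$ ab)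
      + (\<Sum>j=2..n. x $ (j - 1) * Xmat n (j - 1) n $$ ab))"

end

theory Submission
  imports Defs
begin

text \<open>
  The map e_1 -> sum_i X_(i,i+1), e_j -> X_(j-1,n) is an injective homomorphism by an entrywise
  computation, so mu_bar(f_n) <= n. Conversely, let A, C in h_m be the images of e_1 and e_n;
  then ad_A^(n-2) C ~= 0, ad_A^(n-1) C = 0 and [C,[A,C]] = 0. Say that X has level l if it
  vanishes below its l-th superdiagonal. For upper triangular A, ad_A preserves levels and acts
  on the l-th superdiagonal as multiplication by a_(i,i) - a_(i+l,i+l), so it raises the level
  of every X on which it is nilpotent. Now [A,C] has level 1, and even level 2 because
  [C,[A,C]] = 0; hence the nonzero matrix ad_A^(n-3) [A,C] has level n - 1, forcing n - 1 < m.
\<close>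

definition upper_level :: "nat \<Rightarrow> nat \<Rightarrow> complex mat \<Rightarrow> bool" where
  "upper_level m l X \<longleftrightarrow> X \<in> carrier_mat m m \<and> (\<forall>i<m. \<forall>j<m. j < i + l \<longrightarrow> X $$ (i,j) = 0)"

lemma upper_level_0_iff: "upper_level m 0 X \<longleftrightarrow> X \<in> upper_tri m"
  unfolding upper_level_def upper_tri_def by auto

lemma upper_level_nth_eq_0:
  "upper_level m l X \<Longrightarrow> i < m \<Longrightarrow> j < m \<Longrightarrow> j < i + l \<Longrightarrow> X $$ (i,j) = 0"
  unfolding upper_level_def by blast

lemma upper_level_carrier: "upper_level m l X \<Longrightarrow> X \<in> carrier_mat m m"
  unfolding upper_level_def by blast

lemma upper_level_mult_nth:
  assumes A: "upper_level m p A" and B: "upper_level m q B" and ij: "i < m" "j < m"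
  shows "(A * B) $$ (i,j) = (\<Sum>k\<in>{i+p..j-q}. A $$ (i,k) * B $$ (k,j))"
proof -
  have "(A * B) $$ (i,j) = (\<Sum>k<m. A $$ (i,k) * B $$ (k,j))"
    using A B ij by (auto simp: upper_level_def scalar_prod_def lessThan_atLeast0 intro!: sum.cong)
  also have "\<dots> = (\<Sum>k\<in>{i+p..j-q}. A $$ (i,k) * B $$ (k,j))"
  proof (rule sum.mono_neutral_right)
    show "{i+p..j-q} \<subseteq> {..<m}" using ij by auto
    show "\<forall>k\<in>{..<m} - {i+p..j-q}. A $$ (i,k) * B $$ (k,j) = 0"
    proof
      fix k assume k: "k \<in> {..<m} - {i+p..j-q}"
      then consider "k < i + p" | "j < k + q" by force
      then show "A $$ (i,k) * B $$ (k,j) = 0"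
        by cases (use k ij upper_level_nth_eq_0[OF A] upper_level_nth_eq_0[OF B] in auto)
    qed
  qed simp
  finally show ?thesis .
qed

lemma upper_level_mult:
  assumes A: "upper_level m p A" and B: "upper_level m q B"
  shows "upper_level m (p + q) (A * B)"
  unfolding upper_level_def
proof (intro conjI allI impI)
  show "A * B \<in> carrier_mat m m" using A B by (auto simp: upper_level_def)
  fix i j assume "i < m" "j < m" "j < i + (p + q)"
  then show "(A * B) $$ (i,j) = 0"
    by (auto simp: upper_level_mult_nth[OF A B] intro!: sum.neutral upper_level_nth_eq_0[OF B])
qed

lemma upper_level_mult_superdiag:
  assumes "upper_level m p A" "upper_level m q B" "i + p + q < m"
  shows "(A * B) $$ (i, i+p+q) = A $$ (i, i+p) * B $$ (i+p, i+p+q)"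
  using upper_level_mult_nth[OF assms(1,2), of i "i+p+q"] assms(3) by simp

lemma upper_mult_nth_Suc:
  assumes "upper_level m 0 A" "upper_level m 0 B" "Suc i < m"
  shows "(A * B) $$ (i, Suc i) = A $$ (i,i) * B $$ (i, Suc i) + A $$ (i, Suc i) * B $$ (Suc i, Suc i)"
  using upper_level_mult_nth[OF assms(1,2), of i "Suc i"] assms(3) by simp

lemma upper_level_diff:
  assumes "upper_level m l A" "upper_level m l B"
  shows "upper_level m l (A - B)"
  using assms unfolding upper_level_def by auto

lemma upper_level_commutator:
  assumes "upper_level m p A" "upper_level m q B"
  shows "upper_level m (p + q) (commutator A B)"
  unfolding commutator_def
  using upper_level_diff upper_level_mult[OF assms] upper_level_mult[OF assms(2,1)]
  by (simp add: add.commute)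

lemma commutator_nth:
  assumes "A \<in> carrier_mat m m" "B \<in> carrier_mat m m" "i < m" "j < m"
  shows "commutator A B $$ (i,j) = (A * B) $$ (i,j) - (B * A) $$ (i,j)"
  using assms unfolding commutator_def by simp

lemma commutator_superdiag:
  assumes A: "upper_level m p A" and B: "upper_level m q B" and i: "i + p + q < m"
  shows "commutator A B $$ (i, i+p+q) = A $$ (i, i+p) * B $$ (i+p, i+p+q) - B $$ (i, i+q) * A $$ (i+q, i+p+q)"
proof -
  have "(B * A) $$ (i, i+q+p) = B $$ (i, i+q) * A $$ (i+q, i+q+p)"
    using upper_level_mult_superdiag[OF B A] i by simp
  then show ?thesis
    using i upper_level_mult_superdiag[OF A B i]
      commutator_nth[OF upper_level_carrier[OF A] upper_level_carrier[OF B], of i "i+p+q"]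
    by (simp add: add_ac)
qed

lemma upper_level_SucI:
  assumes X: "upper_level m l X" and diag: "\<And>i. i + l < m \<Longrightarrow> X $$ (i, i+l) = 0"
  shows "upper_level m (Suc l) X"
  unfolding upper_level_def
proof (intro conjI allI impI)
  show "X \<in> carrier_mat m m" using X by (rule upper_level_carrier)
  fix i j assume ij: "i < m" "j < m" "j < i + Suc l"
  show "X $$ (i,j) = 0"
  proof (cases "j = i + l")
    case True then show ?thesis using diag ij by simp
  next
    case False then show ?thesis using upper_level_nth_eq_0[OF X] ij by simp
  qed
qed

lemma upper_level_eq_zero:
  assumes "upper_level m l X" "m \<le> l"
  shows "X = 0\<^sub>m m m"
  using assms unfolding upper_level_def by (intro eq_matI) auto

lemma upper_level_commutator_one:
  assumes "upper_level m 0 A" "upper_level m 0 C"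
  shows "upper_level m 1 (commutator A C)"
  using upper_level_SucI[OF upper_level_commutator[OF assms]] commutator_superdiag[OF assms]
  by simp

lemma commutator_zero_right: "A \<in> carrier_mat m m \<Longrightarrow> commutator A (0\<^sub>m m m) = 0\<^sub>m m m"
  unfolding commutator_def by auto

lemma funpow_commutator_zero:
  "A \<in> carrier_mat m m \<Longrightarrow> (commutator A ^^ k) (0\<^sub>m m m) = 0\<^sub>m m m"
  by (induction k) (simp_all add: commutator_zero_right)

lemma upper_level_funpow_commutator:
  assumes "upper_level m 0 A" "upper_level m l X"
  shows "upper_level m l ((commutator A ^^ k) X)"
  by (induction k) (use assms upper_level_commutator[of m 0 A l] in auto)

lemma commutator_superdiag_upper:
  assumes A: "upper_level m 0 A" and X: "upper_level m l X" and i: "i + l < m"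
  shows "commutator A X $$ (i, i+l) = (A $$ (i,i) - A $$ (i+l, i+l)) * X $$ (i, i+l)"
  using commutator_superdiag[OF A X, of i] i by (simp add: algebra_simps)

lemma funpow_commutator_superdiag:
  assumes A: "upper_level m 0 A" and X: "upper_level m l X" and i: "i + l < m"
  shows "(commutator A ^^ k) X $$ (i, i+l) = (A $$ (i,i) - A $$ (i+l, i+l)) ^ k * X $$ (i, i+l)"
proof (induction k)
  case (Suc k)
  then show ?case
    using commutator_superdiag_upper[OF A upper_level_funpow_commutator[OF A X, of k] i] by simp
qed simp

lemma upper_level_commutator_Suc:
  assumes A: "upper_level m 0 A" and X: "upper_level m l X"
    and nilpotent: "(commutator A ^^ K) X = 0\<^sub>m m m"
  shows "upper_level m (Suc l) (commutator A X)"
proof (rule upper_level_SucI)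
  show "upper_level m l (commutator A X)" using upper_level_commutator[OF A X] by simp
  fix i assume i: "i + l < m"
  have "(A $$ (i,i) - A $$ (i+l, i+l)) ^ K * X $$ (i, i+l) = 0"
    using funpow_commutator_superdiag[OF A X i, of K] nilpotent i by simp
  then have "(A $$ (i,i) - A $$ (i+l, i+l)) * X $$ (i, i+l) = 0" by auto
  then show "commutator A X $$ (i, i+l) = 0"
    using commutator_superdiag_upper[OF A X i] by simp
qed

lemma upper_level_funpow_commutator_add:
  assumes A: "upper_level m 0 A" and X: "upper_level m l X"
    and nilpotent: "(commutator A ^^ K) X = 0\<^sub>m m m"
  shows "upper_level m (l + t) ((commutator A ^^ t) X)"
proof (induction t)
  case (Suc t)
  have "(commutator A ^^ K) ((commutator A ^^ t) X) = (commutator A ^^ t) ((commutator A ^^ K) X)"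
    by (metis add.commute comp_apply funpow_add)
  also have "\<dots> = 0\<^sub>m m m"
    using nilpotent funpow_commutator_zero[OF upper_level_carrier[OF A]] by simp
  finally show ?case
    using upper_level_commutator_Suc[OF A Suc.IH] by simp
qed (use X in simp)

lemma upper_level_commutator_two:
  assumes A: "upper_level m 0 A" and C: "upper_level m 0 C"
    and nilpotent: "(commutator A ^^ K) (commutator A C) = 0\<^sub>m m m"
    and commute: "commutator C (commutator A C) = 0\<^sub>m m m"
  shows "upper_level m 2 (commutator A C)"
proof -
  let ?D = "commutator A C"
  have D: "upper_level m 1 ?D" by (rule upper_level_commutator_one[OF A C])
  have "upper_level m (Suc 1) ?D"
  proof (rule upper_level_SucI[OF D])
    fix i assume i: "i + 1 < m"
    let ?a = "A $$ (i,i) - A $$ (i+1, i+1)" and ?c = "C $$ (i,i) - C $$ (i+1, i+1)"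
    have "?a ^ K * ?D $$ (i, i+1) = 0"
      using funpow_commutator_superdiag[OF A D i, of K] nilpotent i by simp
    then have a: "?a = 0 \<or> ?D $$ (i, i+1) = 0" by auto
    have c: "?c * ?D $$ (i, i+1) = 0"
      using commutator_superdiag_upper[OF C D i] commute i by simp
    have "?D $$ (i, i+1) = ?a * C $$ (i, i+1) - ?c * A $$ (i, i+1)"
      using commutator_nth[OF upper_level_carrier[OF A] upper_level_carrier[OF C], of i "i+1"] i
        upper_mult_nth_Suc[OF A C] upper_mult_nth_Suc[OF C A]
      by (simp add: algebra_simps)
    then show "?D $$ (i, i+1) = 0" using a c by auto
  qed
  then show ?thesis by (simp add: numeral_2_eq_2)
qed

lemma ad_chain_length_le:
  assumes A: "upper_level m 0 A" and C: "upper_level m 0 C" and k: "1 \<le> k"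
    and vanish: "(commutator A ^^ Suc k) C = 0\<^sub>m m m"
    and nonzero: "(commutator A ^^ k) C \<noteq> 0\<^sub>m m m"
    and commute: "commutator C (commutator A C) = 0\<^sub>m m m"
  shows "k + 2 \<le> m"
proof (rule ccontr)
  assume "\<not> k + 2 \<le> m"
  let ?D = "commutator A C"
  have shift: "(commutator A ^^ j) ?D = (commutator A ^^ Suc j) C" for j
    by (simp add: funpow_Suc_right del: funpow.simps)
  have D: "upper_level m 2 ?D"
    using upper_level_commutator_two[OF A C _ commute, of k] vanish shift by simp
  obtain j where j: "k = Suc j" using k by (cases k) auto
  have "upper_level m (2 + j) ((commutator A ^^ j) ?D)"
    using upper_level_funpow_commutator_add[OF A D, of k] vanish shift by simp
  moreover have "(commutator A ^^ j) ?D = (commutator A ^^ k) C"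
    by (simp only: shift j)
  ultimately have "(commutator A ^^ k) C = 0\<^sub>m m m"
    using upper_level_eq_zero \<open>\<not> k + 2 \<le> m\<close> j by fastforce
  with nonzero show False ..
qed

lemma fil_br_nth:
  assumes "k < n"
  shows "fil_br n x y $ k = (if 1 \<le> k \<and> k + 2 \<le> n then x $ 0 * y $ (k+1) - x $ (k+1) * y $ 0 else 0)"
proof -
  let ?c = "1 \<le> k \<and> k + 2 \<le> n"
  have summand: "x $ i * y $ j * fil_basis_br n i j $ k =
      (if j = k+1 then (if i = 0 then (if ?c then x $ 0 * y $ (k+1) else 0) else 0) else 0)
    - (if j = 0 then (if i = k+1 then (if ?c then x $ (k+1) * y $ 0 else 0) else 0) else 0)"
    if "i < n" "j < n" for i j
    using that assms by (auto simp: fil_basis_br_def)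
  have "fil_br n x y $ k = (\<Sum>i<n. \<Sum>j<n. x $ i * y $ j * fil_basis_br n i j $ k)"
    using assms by (simp add: fil_br_def)
  also have "\<dots> = (\<Sum>i<n. \<Sum>j<n.
      (if j = k+1 then (if i = 0 then (if ?c then x $ 0 * y $ (k+1) else 0) else 0) else 0)
    - (if j = 0 then (if i = k+1 then (if ?c then x $ (k+1) * y $ 0 else 0) else 0) else 0))"
    by (intro sum.cong refl) (simp add: summand)
  also have "\<dots> = (if ?c then x $ 0 * y $ (k+1) - x $ (k+1) * y $ 0 else 0)"
    using assms by (simp add: sum_subtractf sum.delta if_distrib[of "\<lambda>t. \<Sum>j<n. t"] cong: if_cong)
  finally show ?thesis .
qed

lemma fil_br_carrier: "fil_br n x y \<in> carrier_vec n"
  by (simp add: fil_br_def)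

lemma fil_br_unit_vec:
  assumes "i < n" "j < n"
  shows "fil_br n (unit_vec n i) (unit_vec n j) = fil_basis_br n i j"
proof (rule eq_vecI)
  show "dim_vec (fil_br n (unit_vec n i) (unit_vec n j)) = dim_vec (fil_basis_br n i j)"
    by (simp add: fil_br_def fil_basis_br_def)
  fix k assume "k < dim_vec (fil_basis_br n i j)"
  then have "k < n" by (simp add: fil_basis_br_def split: if_splits)
  then show "fil_br n (unit_vec n i) (unit_vec n j) $ k = fil_basis_br n i j $ k"
    using assms by (auto simp: fil_br_nth fil_basis_br_def)
qed

lemma dim_fil_rep [simp]: "dim_row (fil_rep n x) = n" "dim_col (fil_rep n x) = n"
  by (simp_all add: fil_rep_def)

lemma fil_rep_carrier: "fil_rep n x \<in> carrier_mat n n"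
  by (simp add: carrier_matI)

lemma fil_rep_nth:
  assumes "a < n" "b < n"
  shows "fil_rep n x $$ (a,b) =
    (if b = a+1 \<and> a+3 \<le> n then x $ 0 else 0) + (if b = n-1 \<and> a+2 \<le> n then x $ (a+1) else 0)"
proof -
  have "(\<Sum>i=1..n-2. Xmat n i (i+1) $$ (a,b)) = (\<Sum>i=1..n-2. if i = a+1 then (if b = a+1 then 1 else 0) else 0)"
    by (rule sum.cong) (use assms in \<open>auto simp: Xmat_def\<close>)
  also have "\<dots> = (if b = a+1 \<and> a+3 \<le> n then 1 else 0)"
    by (subst sum.delta) auto
  moreover have "(\<Sum>j=2..n. x $ (j-1) * Xmat n (j-1) n $$ (a,b))
      = (\<Sum>j=2..n. if j = a+2 then (if b = n-1 then x $ (a+1) else 0) else 0)"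
    by (rule sum.cong) (use assms in \<open>auto simp: Xmat_def\<close>)
  moreover have "\<dots> = (if b = n-1 \<and> a+2 \<le> n then x $ (a+1) else 0)"
    by (subst sum.delta) auto
  ultimately show ?thesis
    using assms by (simp add: fil_rep_def)
qed

lemma fil_rep_mult_nth:
  assumes "a < n" "b < n"
  shows "(fil_rep n x * fil_rep n y) $$ (a,b) = (if a+3 \<le> n then
    x $ 0 * ((if b = a+2 \<and> a+4 \<le> n then y $ 0 else 0) + (if b = n-1 then y $ (a+2) else 0)) else 0)"
proof -
  have "(fil_rep n x * fil_rep n y) $$ (a,b) = (\<Sum>c<n. fil_rep n x $$ (a,c) * fil_rep n y $$ (c,b))"
    using assms by (auto simp: fil_rep_def scalar_prod_def lessThan_atLeast0 intro!: sum.cong)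
  also have "\<dots> = (\<Sum>c<n. if c = a+1 then (if a+3 \<le> n then x $ 0 * fil_rep n y $$ (a+1,b) else 0) else 0)"
    by (rule sum.cong) (use assms in \<open>auto simp: fil_rep_nth\<close>)
  also have "\<dots> = (if a+3 \<le> n then x $ 0 * fil_rep n y $$ (a+1,b) else 0)"
    by (simp add: sum.delta)
  finally show ?thesis
    using assms by (auto simp: fil_rep_nth)
qed

lemma fil_rep_bracket:
  "fil_rep n (fil_br n x y) = commutator (fil_rep n x) (fil_rep n y)"
proof (rule eq_matI)
  fix a b assume "a < dim_row (commutator (fil_rep n x) (fil_rep n y))"
    "b < dim_col (commutator (fil_rep n x) (fil_rep n y))"
  then have ab: "a < n" "b < n" by (simp_all add: commutator_def)
  show "fil_rep n (fil_br n x y) $$ (a,b) = commutator (fil_rep n x) (fil_rep n y) $$ (a,b)"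
    unfolding commutator_nth[OF fil_rep_carrier fil_rep_carrier ab] fil_rep_mult_nth[OF ab] fil_rep_nth[OF ab]
    using ab by (auto simp: fil_br_nth algebra_simps)
qed (simp_all add: commutator_def)

lemma fil_rep_add:
  assumes "x \<in> carrier_vec n" "y \<in> carrier_vec n"
  shows "fil_rep n (x + y) = fil_rep n x + fil_rep n y"
  by (rule eq_matI) (use assms in \<open>auto simp: fil_rep_nth\<close>)

lemma fil_rep_smult:
  assumes "x \<in> carrier_vec n"
  shows "fil_rep n (c \<cdot>\<^sub>v x) = c \<cdot>\<^sub>m fil_rep n x"
  by (rule eq_matI) (use assms in \<open>auto simp: fil_rep_nth algebra_simps\<close>)

lemma fil_rep_upper_tri: "fil_rep n x \<in> upper_tri n"
  unfolding upper_tri_def using fil_rep_carrier by (auto simp: fil_rep_nth)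

lemma inj_on_fil_rep:
  assumes "3 \<le> n"
  shows "inj_on (fil_rep n) (carrier_vec n)"
proof (rule inj_onI)
  fix x y assume x: "x \<in> carrier_vec n" and y: "y \<in> carrier_vec n" and eq: "fil_rep n x = fil_rep n y"
  show "x = y"
  proof (rule eq_vecI)
    fix k assume "k < dim_vec y"
    then have k: "k < n" using y by simp
    show "x $ k = y $ k"
    proof (cases k)
      case 0
      have "1 \<noteq> n - 1" using assms by simp
      then show ?thesis
        using arg_cong[OF eq, of "\<lambda>A. A $$ (0,1)"] assms 0 by (simp add: fil_rep_nth)
    next
      case (Suc k')
      then show ?thesis
        using arg_cong[OF eq, of "\<lambda>A. A $$ (k', n-1)"] k by (auto simp: fil_rep_nth split: if_splits)
    qed
  qed (use x y in simp)
qed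

lemma smult_hom_zero:
  fixes \<phi> :: "'a::comm_ring_1 vec \<Rightarrow> 'a mat"
  assumes smult: "\<forall>c. \<forall>x\<in>carrier_vec d. \<phi> (c \<cdot>\<^sub>v x) = c \<cdot>\<^sub>m \<phi> x"
    and carrier: "\<phi> (0\<^sub>v d) \<in> carrier_mat m m"
  shows "\<phi> (0\<^sub>v d) = 0\<^sub>m m m"
proof -
  have "0 \<cdot>\<^sub>v 0\<^sub>v d = (0\<^sub>v d :: 'a vec)" by auto
  then have "\<phi> (0\<^sub>v d) = \<phi> (0 \<cdot>\<^sub>v 0\<^sub>v d)" by (simp only:)
  also have "\<dots> = 0 \<cdot>\<^sub>m \<phi> (0\<^sub>v d)" using smult by simp
  also have "\<dots> = 0\<^sub>m m m" using carrier by (intro eq_matI) auto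
  finally show ?thesis .
qed

lemma lie_subalgebra_h_image:
  assumes upper: "\<forall>x\<in>carrier_vec d. \<phi> x \<in> upper_tri m"
    and add: "\<forall>x\<in>carrier_vec d. \<forall>y\<in>carrier_vec d. \<phi> (x + y) = \<phi> x + \<phi> y"
    and smult: "\<forall>c. \<forall>x\<in>carrier_vec d. \<phi> (c \<cdot>\<^sub>v x) = c \<cdot>\<^sub>m \<phi> x"
    and bracket: "\<forall>x\<in>carrier_vec d. \<forall>y\<in>carrier_vec d. \<phi> (br x y) = commutator (\<phi> x) (\<phi> y)"
    and br_closed: "\<forall>x\<in>carrier_vec d. \<forall>y\<in>carrier_vec d. br x y \<in> carrier_vec d"
  shows "lie_subalgebra_h m (\<phi> ` carrier_vec d)"
  unfolding lie_subalgebra_h_def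
proof (intro conjI ballI allI)
  show "\<phi> ` carrier_vec d \<subseteq> upper_tri m" using upper by blast
  have "0\<^sub>m m m = \<phi> (0\<^sub>v d)"
    using smult upper by (intro smult_hom_zero[symmetric]) (auto simp: upper_tri_def)
  then show "0\<^sub>m m m \<in> \<phi> ` carrier_vec d" by (rule image_eqI) simp
next
  fix A B assume "A \<in> \<phi> ` carrier_vec d" "B \<in> \<phi> ` carrier_vec d"
  then obtain x y where xy: "x \<in> carrier_vec d" "y \<in> carrier_vec d" "A = \<phi> x" "B = \<phi> y" by blast
  have "A + B = \<phi> (x + y)" using xy add by simp
  then show "A + B \<in> \<phi> ` carrier_vec d" by (rule image_eqI) (use xy in simp)
  have "commutator A B = \<phi> (br x y)" using xy bracket by simp
  then show "commutator A B \<in> \<phi> ` carrier_vec d" by (rule image_eqI) (use xy br_closed in simp)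
next
  fix c A assume "A \<in> \<phi> ` carrier_vec d"
  then obtain x where x: "x \<in> carrier_vec d" "A = \<phi> x" by blast
  then have "c \<cdot>\<^sub>m A = \<phi> (c \<cdot>\<^sub>v x)" using smult by simp
  then show "c \<cdot>\<^sub>m A \<in> \<phi> ` carrier_vec d" by (rule image_eqI) (use x in simp)
qed

lemma fil_hom_unit_vec_bracket:
  assumes hom: "\<forall>x\<in>carrier_vec n. \<forall>y\<in>carrier_vec n. \<phi> (fil_br n x y) = commutator (\<phi> x) (\<phi> y)"
    and "i < n" "j < n"
  shows "commutator (\<phi> (unit_vec n i)) (\<phi> (unit_vec n j)) = \<phi> (fil_basis_br n i j)"
  using hom[rule_format, of "unit_vec n i" "unit_vec n j"] fil_br_unit_vec[OF assms(2,3)] by simp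

lemma fil_hom_funpow_commutator:
  assumes hom: "\<forall>x\<in>carrier_vec n. \<forall>y\<in>carrier_vec n. \<phi> (fil_br n x y) = commutator (\<phi> x) (\<phi> y)"
  shows "t \<le> n - 2 \<Longrightarrow>
    (commutator (\<phi> (unit_vec n 0)) ^^ t) (\<phi> (unit_vec n (n-1))) = \<phi> (unit_vec n (n-1-t))"
proof (induction t)
  case (Suc t)
  have t: "2 \<le> n-1-t" "n-1-t < n" "n-1-t-1 = n-1-Suc t" using Suc.prems by auto
  have "(commutator (\<phi> (unit_vec n 0)) ^^ Suc t) (\<phi> (unit_vec n (n-1)))
      = commutator (\<phi> (unit_vec n 0)) (\<phi> (unit_vec n (n-1-t)))"
    using Suc by simp
  also have "\<dots> = \<phi> (fil_basis_br n 0 (n-1-t))"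
    using t by (intro fil_hom_unit_vec_bracket[OF hom]) auto
  also have "\<dots> = \<phi> (unit_vec n (n-1-Suc t))"
    using t by (simp add: fil_basis_br_def)
  finally show ?case .
qed simp

lemma lie_iso_fil_dim_le:
  assumes n: "3 \<le> n" and L: "lie_subalgebra_h m L" and iso: "lie_iso n (fil_br n) L \<phi>"
  shows "n \<le> m"
proof -
  let ?e = "unit_vec n :: nat \<Rightarrow> complex vec"
  have bij: "bij_betw \<phi> (carrier_vec n) L"
    and smult: "\<forall>c. \<forall>x\<in>carrier_vec n. \<phi> (c \<cdot>\<^sub>v x) = c \<cdot>\<^sub>m \<phi> x"
    and hom: "\<forall>x\<in>carrier_vec n. \<forall>y\<in>carrier_vec n. \<phi> (fil_br n x y) = commutator (\<phi> x) (\<phi> y)"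
    using iso unfolding lie_iso_def by blast+
  have upper: "\<phi> x \<in> upper_tri m" if "x \<in> carrier_vec n" for x
    using bij_betw_apply[OF bij that] L unfolding lie_subalgebra_h_def by blast
  have zero: "\<phi> (0\<^sub>v n) = 0\<^sub>m m m"
    using upper[of "0\<^sub>v n"] by (intro smult_hom_zero[OF smult]) (simp add: upper_tri_def)
  define A where "A = \<phi> (?e 0)"
  define C where "C = \<phi> (?e (n-1))"
  have A: "upper_level m 0 A" and C: "upper_level m 0 C"
    unfolding A_def C_def upper_level_0_iff by (simp_all add: upper)
  have e1: "(commutator A ^^ (n-2)) C = \<phi> (?e 1)"
    using fil_hom_funpow_commutator[OF hom, of "n-2"] n by (simp add: A_def C_def numeral_eq_Suc)
  have vanish: "(commutator A ^^ Suc (n-2)) C = 0\<^sub>m m m"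
    using e1 n zero by (simp add: A_def fil_hom_unit_vec_bracket[OF hom] fil_basis_br_def)
  have nonzero: "(commutator A ^^ (n-2)) C \<noteq> 0\<^sub>m m m"
  proof
    assume "(commutator A ^^ (n-2)) C = 0\<^sub>m m m"
    then have "\<phi> (?e 1) = \<phi> (0\<^sub>v n)" using e1 zero by simp
    moreover have "inj_on \<phi> (carrier_vec n)" using bij by (rule bij_betw_imp_inj_on)
    ultimately have "?e 1 = 0\<^sub>v n" by (simp add: inj_on_eq_iff)
    then show False using n by simp
  qed
  have "commutator A C = \<phi> (?e (n-2))"
    using fil_hom_funpow_commutator[OF hom, of 1] n by (simp add: A_def C_def numeral_eq_Suc)
  then have commute: "commutator C (commutator A C) = 0\<^sub>m m m"
    using n zero by (simp add: C_def fil_hom_unit_vec_bracket[OF hom] fil_basis_br_def)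
  have "n - 2 + 2 \<le> m"
    by (rule ad_chain_length_le[OF A C _ vanish nonzero commute]) (use n in simp)
  then show ?thesis using n by simp
qed

theorem proposition5:
  fixes n :: nat
  assumes "n \<ge> 3"
  shows "mu_bar n (fil_br n) = n \<and>
    (\<forall>x\<in>carrier_vec n. fil_rep n x \<in> upper_tri n) \<and>
    (\<forall>x\<in>carrier_vec n. \<forall>y\<in>carrier_vec n. fil_rep n (x + y) = fil_rep n x + fil_rep n y) \<and>
    (\<forall>c. \<forall>x\<in>carrier_vec n. fil_rep n (c \<cdot>\<^sub>v x) = c \<cdot>\<^sub>m fil_rep n x) \<and>
    (\<forall>x\<in>carrier_vec n. \<forall>y\<in>carrier_vec n.
        fil_rep n (fil_br n x y) = commutator (fil_rep n x) (fil_rep n y)) \<and>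
    inj_on (fil_rep n) (carrier_vec n)"
proof -
  let ?L = "fil_rep n ` carrier_vec n"
  have hom: "\<forall>x\<in>carrier_vec n. fil_rep n x \<in> upper_tri n"
    "\<forall>x\<in>carrier_vec n. \<forall>y\<in>carrier_vec n. fil_rep n (x + y) = fil_rep n x + fil_rep n y"
    "\<forall>c. \<forall>x\<in>carrier_vec n. fil_rep n (c \<cdot>\<^sub>v x) = c \<cdot>\<^sub>m fil_rep n x"
    "\<forall>x\<in>carrier_vec n. \<forall>y\<in>carrier_vec n.
        fil_rep n (fil_br n x y) = commutator (fil_rep n x) (fil_rep n y)"
    by (simp_all add: fil_rep_upper_tri fil_rep_add fil_rep_smult fil_rep_bracket)
  have inj: "inj_on (fil_rep n) (carrier_vec n)" by (rule inj_on_fil_rep[OF assms])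
  have sub: "lie_subalgebra_h n ?L"
    by (rule lie_subalgebra_h_image[OF hom]) (simp add: fil_br_carrier)
  have iso: "lie_iso n (fil_br n) ?L (fil_rep n)"
    unfolding lie_iso_def by (intro conjI inj_on_imp_bij_betw[OF inj] hom(2-4))
  have mu: "mu_bar n (fil_br n) = n"
    unfolding mu_bar_def
  proof (rule Least_equality)
    show "\<exists>L \<phi>. lie_subalgebra_h n L \<and> lie_iso n (fil_br n) L \<phi>" using sub iso by blast
    show "n \<le> m" if "\<exists>L \<phi>. lie_subalgebra_h m L \<and> lie_iso n (fil_br n) L \<phi>" for m
      using that lie_iso_fil_dim_le[OF assms] by blast
  qed
  show ?thesis by (intro conjI mu inj hom)
qed

end
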